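(* Let $K$ be a field and $A,B\in M_n(K)$. Then $\dim\ker M(A,B)\ge n\sum (m-1)$, where $m$ runs over the geometric multiplicities of the distinct eigenvalues of $B$ lying in $K$.
   Context: For a commutative ring $R$ with $1$ and $A,B\in M_n(R)$, $M(A,B)\in M_{n^2}(R)$ is the block matrix consisting of $n\times n$ blocks whose $(i,j)$-th block is $A^{j-1}B^{i-1}$ ($i,j=1,\dots,n$); it acts on $K^{n^2}$ viewed as column vectors. *)

theory Defs
  imports "Jordan_Normal_Form.Jordan_Normal_Form_Uniqueness"
begin

text \<open>The block matrix M(A,B) of size n^2 x n^2 (n = dim_row A), whose
  (i,j)-th n x n block (1-based) is A^(j-1) * B^(i-1).\<close>
definition block_M :: "'a :: comm_ring_1 mat \<Rightarrow> 'a mat \<Rightarrow> 'a mat" where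
  "block_M A B = (let n = dim_row A in
     mat (n * n) (n * n)
       (\<lambda>(r, c). ((A ^\<^sub>m (c div n)) * (B ^\<^sub>m (r div n))) $$ (r mod n, c mod n)))"

definition geom_mult :: "'a :: field mat \<Rightarrow> 'a \<Rightarrow> nat" where
  "geom_mult B e = kernel_dim (char_matrix B e)"

end

theory Submission
  imports Defs "Jordan_Normal_Form.Spectral_Radius"
begin

text \<open>Split \<open>x \<in> K^(n*n)\<close> into \<open>n\<close> blocks \<open>x_0, \<dots>, x_(n-1)\<close>; the \<open>i\<close>-th block of
  \<open>M(A,B) x\<close> is \<open>\<Sum>_j A^j B^i x_j\<close>. Let \<open>u_1, \<dots>, u_s\<close> be the union of bases of all
  eigenspaces of \<open>B\<close>, \<open>B u_k = \<lambda>_k u_k\<close>; they are linearly independent and \<open>s = \<Sum> m\<close>.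
  If every block is a combination \<open>x_j = \<Sum>_k c_jk u_k\<close>, the \<open>i\<close>-th block of \<open>M(A,B) x\<close>
  equals \<open>\<Sum>_\<lambda> \<lambda>^i y_\<lambda>\<close> with \<open>y_\<lambda> = \<Sum>_(\<lambda>_k = \<lambda>) \<Sum>_j c_jk A^j u_k\<close>, so \<open>x\<close> lies in
  the kernel once all \<open>y_\<lambda>\<close> vanish. These are \<open>d n\<close> linear conditions on the \<open>n s\<close>
  coefficients \<open>c_jk\<close> (\<open>d\<close> the number of eigenvalues), and \<open>c \<mapsto> x\<close> is injective; hence
  the kernel has dimension at least \<open>n s - d n = n \<Sum> (m - 1)\<close>.\<close>

section \<open>Kernel dimensions\<close>

text \<open>Linear independence of a finite set of vectors in \<open>K^n\<close>, spelled out in coordinates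
  so that it can be used without interpreting the locale \<open>vec_space\<close>.\<close>
definition coord_lin_indpt :: "nat \<Rightarrow> 'a :: field vec set \<Rightarrow> bool" where
  "coord_lin_indpt n S \<longleftrightarrow>
     (\<forall>a. (\<forall>i<n. (\<Sum>v\<in>S. a v * v $ i) = 0) \<longrightarrow> (\<forall>v\<in>S. a v = 0))"

lemma (in vec_space) lin_indpt_iff_coord_lin_indpt:
  assumes fin: "finite S" and S: "S \<subseteq> carrier_vec n"
  shows "lin_indpt S \<longleftrightarrow> coord_lin_indpt n S"
proof -
  have lincomb_eq: "lincomb a S = 0\<^sub>v n \<longleftrightarrow> (\<forall>i<n. (\<Sum>v\<in>S. a v * v $ i) = 0)" for a
  proof
    assume zero: "lincomb a S = 0\<^sub>v n"
    show "\<forall>i<n. (\<Sum>v\<in>S. a v * v $ i) = 0"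
    proof (intro allI impI)
      fix i assume i: "i < n"
      have "(\<Sum>v\<in>S. a v * v $ i) = lincomb a S $ i" using lincomb_index[OF i S] by simp
      then show "(\<Sum>v\<in>S. a v * v $ i) = 0" using zero i by simp
    qed
  next
    assume "\<forall>i<n. (\<Sum>v\<in>S. a v * v $ i) = 0"
    then show "lincomb a S = 0\<^sub>v n"
      by (intro eq_vecI) (use S in \<open>auto simp: lincomb_index\<close>)
  qed
  show ?thesis
  proof
    assume "lin_indpt S"
    then show "coord_lin_indpt n S"
      unfolding coord_lin_indpt_def lincomb_eq[symmetric]
      using not_lindepD[OF _ fin subset_refl] by blast
  next
    assume ind: "coord_lin_indpt n S"
    show "lin_indpt S"
    proof (rule finite_lin_indpt2[OF fin], goal_cases)
      case 1
      show ?case using S by simp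
    next
      case (2 a)
      then show ?case using ind unfolding coord_lin_indpt_def lincomb_eq[symmetric] by simp
    qed
  qed
qed

lemma kernel_basis_coord_lin_indpt:
  fixes P :: "'a :: field mat"
  assumes P: "P \<in> carrier_mat nr nc"
  obtains S where "finite S" "S \<subseteq> mat_kernel P" "coord_lin_indpt nc S" "card S = kernel_dim P"
proof -
  interpret K: kernel nr nc P by (unfold_locales, rule P)
  obtain S where fin: "finite S" and basis: "K.basis S" using kernel_basis_exists[OF P] by auto
  have SK: "S \<subseteq> mat_kernel P" using basis unfolding K.Ker.basis_def by auto
  have "K.Ker.lin_indpt S" using basis unfolding K.Ker.basis_def by auto
  then have "K.NC.lin_indpt S" using K.lindep_same[OF SK] by simp
  moreover have "S \<subseteq> carrier_vec nc" using SK mat_kernel[OF P] by auto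
  ultimately have "coord_lin_indpt nc S" using K.NC.lin_indpt_iff_coord_lin_indpt[OF fin] by simp
  moreover have "card S = kernel_dim P" using K.Ker.dim_basis[OF fin basis] by simp
  ultimately show thesis using that fin SK by blast
qed

lemma card_le_kernel_dim:
  fixes Q :: "'a :: field mat"
  assumes Q: "Q \<in> carrier_mat nr nc"
    and fin: "finite T" and TK: "T \<subseteq> mat_kernel Q" and ind: "coord_lin_indpt nc T"
  shows "card T \<le> kernel_dim Q"
proof -
  interpret K: kernel nr nc Q by (unfold_locales, rule Q)
  have "T \<subseteq> carrier_vec nc" using TK mat_kernel[OF Q] by auto
  then have "K.NC.lin_indpt T" using K.NC.lin_indpt_iff_coord_lin_indpt fin ind by blast
  then have li: "K.Ker.lin_indpt T" using K.lindep_same[OF TK] by simp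
  obtain R where "finite R" "K.basis R" using kernel_basis_exists[OF Q] by auto
  then have "K.Ker.fin_dim" unfolding K.Ker.fin_dim_def K.Ker.basis_def by auto
  from K.Ker.li_le_dim(2)[OF this _ li] TK show ?thesis by simp
qed

lemma mult_mat_vec_index_sum:
  assumes "A \<in> carrier_mat nr nc" "v \<in> carrier_vec nc" "i < nr"
  shows "(A *\<^sub>v v) $ i = (\<Sum>r<nc. A $$ (i,r) * v $ r)"
  using assms by (simp add: mult_mat_vec_def scalar_prod_def lessThan_atLeast0)

lemma coord_lin_indpt_image:
  fixes X :: "'a :: field mat"
  assumes X: "X \<in> carrier_mat q p"
    and inj: "\<And>c. c \<in> carrier_vec p \<Longrightarrow> X *\<^sub>v c = 0\<^sub>v q \<Longrightarrow> c = 0\<^sub>v p"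
    and S: "S \<subseteq> carrier_vec p" and ind: "coord_lin_indpt p S"
  shows "inj_on ((*\<^sub>v) X) S" and "coord_lin_indpt q ((*\<^sub>v) X ` S)"
proof -
  show inj_S: "inj_on ((*\<^sub>v) X) S"
  proof (rule inj_onI)
    fix u v assume "u \<in> S" "v \<in> S" and eq: "X *\<^sub>v u = X *\<^sub>v v"
    then have u: "u \<in> carrier_vec p" and v: "v \<in> carrier_vec p" using S by auto
    have "X *\<^sub>v (u - v) = X *\<^sub>v u - X *\<^sub>v v" using X u v by (simp add: mult_minus_distrib_mat_vec)
    also have "\<dots> = 0\<^sub>v q" using eq X v by simp
    finally have diff: "u - v = 0\<^sub>v p" using inj u v by simp
    show "u = v"
    proof (rule eq_vecI)
      fix i assume i: "i < dim_vec v"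
      have "(u - v) $ i = 0" using diff i v by simp
      then show "u $ i = v $ i" using i u v by simp
    qed (use u v in simp)
  qed
  show "coord_lin_indpt q ((*\<^sub>v) X ` S)" unfolding coord_lin_indpt_def
  proof (intro allI impI)
    fix a assume zero: "\<forall>i<q. (\<Sum>v\<in>(*\<^sub>v) X ` S. a v * v $ i) = 0"
    define w where "w = vec p (\<lambda>r. \<Sum>v\<in>S. a (X *\<^sub>v v) * v $ r)"
    have "X *\<^sub>v w = 0\<^sub>v q"
    proof (rule eq_vecI)
      fix i assume "i < dim_vec (0\<^sub>v q :: 'a vec)"
      then have i: "i < q" by simp
      have "(X *\<^sub>v w) $ i = (\<Sum>r<p. X $$ (i,r) * (\<Sum>v\<in>S. a (X *\<^sub>v v) * v $ r))"
        using mult_mat_vec_index_sum[OF X _ i, of w] unfolding w_def by simp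
      also have "\<dots> = (\<Sum>v\<in>S. a (X *\<^sub>v v) * (\<Sum>r<p. X $$ (i,r) * v $ r))"
        unfolding sum_distrib_left by (subst sum.swap) (simp add: ac_simps)
      also have "\<dots> = (\<Sum>v\<in>S. a (X *\<^sub>v v) * (X *\<^sub>v v) $ i)"
        using mult_mat_vec_index_sum[OF X _ i] S by (intro sum.cong) auto
      also have "\<dots> = (\<Sum>v\<in>(*\<^sub>v) X ` S. a v * v $ i)"
        by (simp add: sum.reindex[OF inj_S])
      finally show "(X *\<^sub>v w) $ i = (0\<^sub>v q :: 'a vec) $ i" using zero i by simp
    qed (use X in simp)
    then have w: "w = 0\<^sub>v p" using inj unfolding w_def by simp
    have coords: "(\<Sum>v\<in>S. a (X *\<^sub>v v) * v $ r) = 0" if "r < p" for r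
      using arg_cong[OF w, of "\<lambda>x. x $ r"] that unfolding w_def by simp
    have "\<forall>v\<in>S. a (X *\<^sub>v v) = 0"
      using ind[unfolded coord_lin_indpt_def, THEN spec[of _ "\<lambda>v. a (X *\<^sub>v v)"]] coords by simp
    then show "\<forall>v\<in>(*\<^sub>v) X ` S. a v = 0" by blast
  qed
qed

lemma kernel_dim_le_of_injective:
  fixes P Q X :: "'a :: field mat"
  assumes P: "P \<in> carrier_mat np p" and Q: "Q \<in> carrier_mat nq q" and X: "X \<in> carrier_mat q p"
    and inj: "\<And>c. c \<in> carrier_vec p \<Longrightarrow> X *\<^sub>v c = 0\<^sub>v q \<Longrightarrow> c = 0\<^sub>v p"
    and maps_kernel: "\<And>c. c \<in> mat_kernel P \<Longrightarrow> X *\<^sub>v c \<in> mat_kernel Q"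
  shows "kernel_dim P \<le> kernel_dim Q"
proof -
  obtain S where fin: "finite S" and SK: "S \<subseteq> mat_kernel P"
    and ind: "coord_lin_indpt p S" and card: "card S = kernel_dim P"
    using kernel_basis_coord_lin_indpt[OF P] .
  have "S \<subseteq> carrier_vec p" using SK mat_kernel[OF P] by auto
  note image = coord_lin_indpt_image[OF X inj this ind]
  have "kernel_dim P = card ((*\<^sub>v) X ` S)" using card_image[OF image(1)] card by simp
  also have "\<dots> \<le> kernel_dim Q"
  proof (rule card_le_kernel_dim[OF Q _ _ image(2)])
    show "finite ((*\<^sub>v) X ` S)" using fin by simp
    show "(*\<^sub>v) X ` S \<subseteq> mat_kernel Q" using SK maps_kernel by blast
  qed
  finally show ?thesis .
qed

lemma kernel_dim_ge_cols_minus_rows: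
  fixes C :: "'a :: field mat"
  shows "dim_col C - dim_row C \<le> kernel_dim C"
proof -
  have C: "C \<in> carrier_mat (dim_row C) (dim_col C)" by auto
  obtain G where G: "gauss_jordan_single C = G" by auto
  note gj = gauss_jordan_single[OF C G]
  from gj(3)[unfolded row_echelon_form_def] gj(2) obtain f where "pivot_fun G f (dim_col C)" by auto
  note pp = pivot_positions[OF gj(2) this]
  have "length (pivot_positions G) \<le> dim_row C" unfolding pp(4)
    by (rule order.trans[OF card_mono[of "{..<dim_row C}"]]) auto
  then show ?thesis unfolding kernel_dim_code G by simp
qed

section \<open>Eigenvectors\<close>

lemma pow_mat_mult_eigenvector:
  fixes B :: "'a :: field mat"
  assumes B: "B \<in> carrier_mat n n" and u: "u \<in> carrier_vec n" and eigen: "B *\<^sub>v u = l \<cdot>\<^sub>v u"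
  shows "(B ^\<^sub>m i) *\<^sub>v u = (l ^ i) \<cdot>\<^sub>v u"
proof (induction i)
  case 0
  then show ?case using B u by simp
next
  case (Suc i)
  have "(B ^\<^sub>m Suc i) *\<^sub>v u = (B ^\<^sub>m i * B) *\<^sub>v u" by simp
  also have "\<dots> = (B ^\<^sub>m i) *\<^sub>v (B *\<^sub>v u)"
    using B u by (intro assoc_mult_mat_vec[of _ n n _ n]) auto
  also have "\<dots> = l \<cdot>\<^sub>v ((B ^\<^sub>m i) *\<^sub>v u)"
    unfolding eigen using B u by (intro mult_mat_vec[of _ n n]) auto
  also have "\<dots> = (l ^ Suc i) \<cdot>\<^sub>v u" unfolding Suc using u by (simp add: smult_smult_assoc)
  finally show ?case .
qed

lemma eigenvector_coord_lincomb:
  fixes B :: "'a :: comm_ring_1 mat" and c :: "'a vec \<Rightarrow> 'a"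
  assumes B: "B \<in> carrier_mat n n"
    and eigen: "\<And>v. v \<in> S \<Longrightarrow> v \<in> carrier_vec n \<and> B *\<^sub>v v = e \<cdot>\<^sub>v v"
  defines "w \<equiv> vec n (\<lambda>r. \<Sum>v\<in>S. c v * v $ r)"
  shows "w \<in> carrier_vec n" and "B *\<^sub>v w = e \<cdot>\<^sub>v w"
proof -
  show w: "w \<in> carrier_vec n" unfolding w_def by simp
  show "B *\<^sub>v w = e \<cdot>\<^sub>v w"
  proof (rule eq_vecI)
    fix i assume "i < dim_vec (e \<cdot>\<^sub>v w)"
    then have i: "i < n" unfolding w_def by simp
    have "(B *\<^sub>v w) $ i = (\<Sum>r<n. B $$ (i,r) * (\<Sum>v\<in>S. c v * v $ r))"
      using mult_mat_vec_index_sum[OF B w i] unfolding w_def by simp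
    also have "\<dots> = (\<Sum>v\<in>S. c v * (\<Sum>r<n. B $$ (i,r) * v $ r))"
      unfolding sum_distrib_left by (subst sum.swap) (simp add: ac_simps)
    also have "\<dots> = (\<Sum>v\<in>S. c v * (e * v $ i))"
    proof (rule sum.cong[OF refl])
      fix v assume "v \<in> S"
      with eigen have v: "v \<in> carrier_vec n" and "B *\<^sub>v v = e \<cdot>\<^sub>v v" by auto
      then have "(\<Sum>r<n. B $$ (i,r) * v $ r) = e * v $ i"
        using mult_mat_vec_index_sum[OF B v i] i by simp
      then show "c v * (\<Sum>r<n. B $$ (i,r) * v $ r) = c v * (e * v $ i)" by simp
    qed
    also have "\<dots> = (e \<cdot>\<^sub>v w) $ i" unfolding w_def using i by (simp add: sum_distrib_left ac_simps)
    finally show "(B *\<^sub>v w) $ i = (e \<cdot>\<^sub>v w) $ i" .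
  qed (use B in \<open>simp add: w_def\<close>)
qed

text \<open>Applying \<open>B - e0\<close> kills the \<open>e0\<close>-summand and rescales the others by \<open>e - e0 \<noteq> 0\<close>.\<close>
lemma eigenvectors_sum_zero_imp_zero:
  fixes B :: "'a :: field mat"
  assumes B: "B \<in> carrier_mat n n" and fin: "finite L"
    and eigen: "\<And>e. e \<in> L \<Longrightarrow> w e \<in> carrier_vec n \<and> B *\<^sub>v w e = e \<cdot>\<^sub>v w e"
    and sum_zero: "\<And>i. i < n \<Longrightarrow> (\<Sum>e\<in>L. w e $ i) = 0"
  shows "\<forall>e\<in>L. w e = 0\<^sub>v n"
  using fin eigen sum_zero
proof (induction L arbitrary: w rule: finite_induct)
  case empty
  then show ?case by simp
next
  case (insert e0 L w)
  have w: "w e \<in> carrier_vec n" if "e \<in> insert e0 L" for e using insert.prems(1) that by auto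
  then have dim_w: "dim_vec (w e) = n" if "e \<in> insert e0 L" for e using that by auto
  have eigen_index: "(\<Sum>r<n. B $$ (i,r) * w e $ r) = e * w e $ i" if "e \<in> insert e0 L" "i < n" for e i
    using mult_mat_vec_index_sum[OF B w[OF that(1)] that(2)] insert.prems(1)[OF that(1)] that(2)
    by (simp add: dim_w[OF that(1)])
  define w' where "w' = (\<lambda>e. (e - e0) \<cdot>\<^sub>v w e)"
  have eigen': "w' e \<in> carrier_vec n \<and> B *\<^sub>v w' e = e \<cdot>\<^sub>v w' e" if e: "e \<in> L" for e
    unfolding w'_def using insert.prems(1)[of e] w[of e] B e
    by (simp add: mult_mat_vec smult_smult_assoc mult.commute)
  have sum_zero': "(\<Sum>e\<in>L. w' e $ i) = 0" if i: "i < n" for i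
  proof -
    have "(\<Sum>e\<in>insert e0 L. e * w e $ i) = (\<Sum>e\<in>insert e0 L. \<Sum>r<n. B $$ (i,r) * w e $ r)"
      using eigen_index i by simp
    also have "\<dots> = (\<Sum>r<n. B $$ (i,r) * (\<Sum>e\<in>insert e0 L. w e $ r))"
      by (subst sum.swap) (simp add: sum_distrib_left)
    also have "\<dots> = 0" using insert.prems(2) by simp
    finally have "(\<Sum>e\<in>insert e0 L. e * w e $ i) = 0" .
    moreover have "(\<Sum>e\<in>L. w' e $ i) = (\<Sum>e\<in>insert e0 L. (e - e0) * w e $ i)"
    proof -
      have "(\<Sum>e\<in>L. w' e $ i) = (\<Sum>e\<in>L. (e - e0) * w e $ i)"
        unfolding w'_def using dim_w i by (intro sum.cong refl) simp
      then show ?thesis using insert.hyps by simp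
    qed
    moreover have "\<dots> = (\<Sum>e\<in>insert e0 L. e * w e $ i) - e0 * (\<Sum>e\<in>insert e0 L. w e $ i)"
      by (simp add: algebra_simps sum_subtractf sum_distrib_left)
    ultimately show ?thesis using insert.prems(2)[OF i] by simp
  qed
  have zero_w': "\<forall>e\<in>L. w' e = 0\<^sub>v n" using insert.IH[OF eigen' sum_zero'] .
  have zero_L: "\<forall>e\<in>L. w e = 0\<^sub>v n"
  proof
    fix e assume e: "e \<in> L"
    then have "e - e0 \<noteq> 0" using insert.hyps(2) by auto
    then have "w e = (1 / (e - e0)) \<cdot>\<^sub>v w' e" unfolding w'_def by (simp add: smult_smult_assoc)
    then show "w e = 0\<^sub>v n" using zero_w' e by (auto intro!: eq_vecI)
  qed
  have "w e0 = 0\<^sub>v n"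
  proof (rule eq_vecI)
    fix i assume "i < dim_vec (0\<^sub>v n :: 'a vec)"
    then have i: "i < n" by simp
    have "w e0 $ i + (\<Sum>e\<in>L. w e $ i) = 0" using insert.prems(2)[OF i] insert.hyps by simp
    then show "w e0 $ i = (0\<^sub>v n :: 'a vec) $ i" using zero_L i by simp
  qed (use w in auto)
  with zero_L show ?case by simp
qed

section \<open>The block matrix on combinations of eigenvectors\<close>

lemma sum_lessThan_mult_blocks:
  fixes F :: "nat \<Rightarrow> 'a :: comm_monoid_add"
  shows "(\<Sum>c<n*s. F c) = (\<Sum>j<n. \<Sum>k<s. F (j*s+k))"
proof -
  have "(\<Sum>c<n*s. F c) = (\<Sum>j<n. sum F {j*s..<j*s+s})" using sum.nat_group[of F s n] by simp
  also have "\<dots> = (\<Sum>j<n. \<Sum>k<s. F (j*s+k))"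
  proof (rule sum.cong[OF refl])
    fix j
    show "sum F {j*s..<j*s+s} = (\<Sum>k<s. F (j*s+k))"
      by (rule sum.reindex_bij_witness[where i="\<lambda>k. j*s+k" and j="\<lambda>c. c - j*s"]) auto
  qed
  finally show ?thesis .
qed

lemma block_index_less:
  fixes j k n s :: nat
  assumes "j < n" and "k < s"
  shows "j*s+k < n*s"
proof -
  have "j*s+k < Suc j * s" using assms(2) by simp
  also have "\<dots> \<le> n*s" using assms(1) by (intro mult_le_mono1) simp
  finally show ?thesis .
qed

lemma block_index_decompose:
  fixes R n s :: nat
  assumes "R < n*s"
  obtains j k where "j < n" "k < s" "R = j*s+k"
proof
  show "R div s < n" using assms by (simp add: less_mult_imp_div_less)
  show "R mod s < s" using assms by (cases s) auto
qed simp

text \<open>Index \<open>j*s + k\<close> holds the coefficient \<open>c_jk\<close> (\<open>j < n\<close>, \<open>k < s\<close>); the image has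
  \<open>j\<close>-th block \<open>\<Sum>_k c_jk u_k\<close>.\<close>
definition coeff_embedding :: "nat \<Rightarrow> nat \<Rightarrow> (nat \<Rightarrow> 'a :: zero vec) \<Rightarrow> 'a mat" where
  "coeff_embedding n s u = mat (n*n) (n*s)
     (\<lambda>(R, c). if R div n = c div s then u (c mod s) $ (R mod n) else 0)"

text \<open>With \<open>g\<close> enumerating the eigenvalues, the \<open>t\<close>-th block of the image of \<open>c\<close> is
  \<open>y_(g t) = \<Sum>_(\<lambda>_k = g t) \<Sum>_j c_jk A^j u_k\<close>.\<close>
definition eigen_constraints ::
    "nat \<Rightarrow> 'a :: comm_ring_1 mat \<Rightarrow> nat \<Rightarrow> (nat \<Rightarrow> 'a vec) \<Rightarrow> (nat \<Rightarrow> 'a) \<Rightarrow> nat \<Rightarrow> (nat \<Rightarrow> 'a) \<Rightarrow> 'a mat"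
  where
  "eigen_constraints n A s u lam d g = mat (d*n) (n*s)
     (\<lambda>(R, c). if lam (c mod s) = g (R div n) then (A ^\<^sub>m (c div s) *\<^sub>v u (c mod s)) $ (R mod n) else 0)"

lemma block_M_carrier: "A \<in> carrier_mat n n \<Longrightarrow> block_M A B \<in> carrier_mat (n*n) (n*n)"
  unfolding block_M_def by (simp add: Let_def)

lemma coeff_embedding_carrier: "coeff_embedding n s u \<in> carrier_mat (n*n) (n*s)"
  unfolding coeff_embedding_def by simp

lemma eigen_constraints_carrier: "eigen_constraints n A s u lam d g \<in> carrier_mat (d*n) (n*s)"
  unfolding eigen_constraints_def by simp

lemma coeff_embedding_mult_vec_index:
  fixes u :: "nat \<Rightarrow> 'a :: comm_ring_1 vec"
  assumes v: "v \<in> carrier_vec (n*s)" and j: "j < n" and r: "r < n"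
  shows "(coeff_embedding n s u *\<^sub>v v) $ (j*n+r) = (\<Sum>k<s. u k $ r * v $ (j*s+k))"
proof -
  let ?X = "coeff_embedding n s u"
  have X: "?X \<in> carrier_mat (n*n) (n*s)" by (rule coeff_embedding_carrier)
  have R: "j*n+r < n*n" using block_index_less[OF j r] .
  have "(?X *\<^sub>v v) $ (j*n+r) = (\<Sum>j'<n. \<Sum>k<s. ?X $$ (j*n+r, j'*s+k) * v $ (j'*s+k))"
    using mult_mat_vec_index_sum[OF X v R] sum_lessThan_mult_blocks by simp
  also have "\<dots> = (\<Sum>j'<n. \<Sum>k<s. if j' = j then u k $ r * v $ (j*s+k) else 0)"
    using R r block_index_less unfolding coeff_embedding_def by (intro sum.cong refl) auto
  also have "\<dots> = (\<Sum>k<s. u k $ r * v $ (j*s+k))"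
    using j by (subst sum.swap) simp
  finally show ?thesis .
qed

lemma coeff_embedding_injective:
  fixes u :: "nat \<Rightarrow> 'a :: comm_ring_1 vec"
  assumes ind: "\<And>a. \<forall>r<n. (\<Sum>k<s. a k * u k $ r) = 0 \<Longrightarrow> \<forall>k<s. a k = 0"
    and v: "v \<in> carrier_vec (n*s)" and zero: "coeff_embedding n s u *\<^sub>v v = 0\<^sub>v (n*n)"
  shows "v = 0\<^sub>v (n*s)"
proof -
  have block_zero: "v $ (j*s+k) = 0" if j: "j < n" and k: "k < s" for j k
  proof -
    have "(\<Sum>k<s. v $ (j*s+k) * u k $ r) = 0" if r: "r < n" for r
    proof -
      have "(\<Sum>k<s. v $ (j*s+k) * u k $ r) = (coeff_embedding n s u *\<^sub>v v) $ (j*n+r)"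
        using coeff_embedding_mult_vec_index[OF v j r] by (simp add: mult.commute)
      also have "\<dots> = 0" using zero block_index_less[OF j r] by simp
      finally show ?thesis .
    qed
    then have "\<forall>k<s. v $ (j*s+k) = 0" by (intro ind) auto
    then show ?thesis using k by simp
  qed
  show ?thesis
  proof (rule eq_vecI)
    fix c assume "c < dim_vec (0\<^sub>v (n*s) :: 'a vec)"
    then have "c < n*s" by simp
    then obtain j k where "j < n" "k < s" "c = j*s+k" by (rule block_index_decompose)
    then show "v $ c = 0\<^sub>v (n*s) $ c" using block_zero block_index_less by simp
  qed (use v in simp)
qed

lemma eigen_constraints_mult_vec_index:
  fixes A :: "'a :: comm_ring_1 mat"
  assumes v: "v \<in> carrier_vec (n*s)" and t: "t < d" and r: "r < n"
  shows "(eigen_constraints n A s u lam d g *\<^sub>v v) $ (t*n+r)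
    = (\<Sum>j<n. \<Sum>k<s. if lam k = g t then v $ (j*s+k) * (A ^\<^sub>m j *\<^sub>v u k) $ r else 0)"
proof -
  let ?C = "eigen_constraints n A s u lam d g"
  have C: "?C \<in> carrier_mat (d*n) (n*s)" by (rule eigen_constraints_carrier)
  have R: "t*n+r < d*n" using block_index_less[OF t r] .
  have "(?C *\<^sub>v v) $ (t*n+r) = (\<Sum>j<n. \<Sum>k<s. ?C $$ (t*n+r, j*s+k) * v $ (j*s+k))"
    using mult_mat_vec_index_sum[OF C v R] sum_lessThan_mult_blocks by simp
  also have "\<dots> = (\<Sum>j<n. \<Sum>k<s. if lam k = g t then v $ (j*s+k) * (A ^\<^sub>m j *\<^sub>v u k) $ r else 0)"
    using R r block_index_less unfolding eigen_constraints_def by (intro sum.cong refl) (auto simp: ac_simps)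
  finally show ?thesis .
qed

lemma block_M_mult_coeff_embedding_index:
  fixes A B :: "'a :: field mat"
  assumes A: "A \<in> carrier_mat n n" and B: "B \<in> carrier_mat n n"
    and eigen: "\<And>k. k < s \<Longrightarrow> u k \<in> carrier_vec n \<and> B *\<^sub>v u k = lam k \<cdot>\<^sub>v u k"
    and v: "v \<in> carrier_vec (n*s)" and i: "i < n" and r: "r < n"
  shows "(block_M A B *\<^sub>v (coeff_embedding n s u *\<^sub>v v)) $ (i*n+r)
    = (\<Sum>j<n. \<Sum>k<s. lam k ^ i * (v $ (j*s+k) * (A ^\<^sub>m j *\<^sub>v u k) $ r))"
proof -
  let ?M = "block_M A B" and ?x = "coeff_embedding n s u *\<^sub>v v"
  have M: "?M \<in> carrier_mat (n*n) (n*n)" using A by (rule block_M_carrier)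
  have x: "?x \<in> carrier_vec (n*n)" using coeff_embedding_carrier v by (rule mult_mat_vec_carrier)
  have R: "i*n+r < n*n" using block_index_less[OF i r] .
  have M_index: "?M $$ (i*n+r, j*n+r') = (A ^\<^sub>m j * B ^\<^sub>m i) $$ (r, r')" if "j < n" "r' < n" for j r'
    using A R block_index_less[OF that] that r unfolding block_M_def by (simp add: Let_def)
  have eigen_index: "(\<Sum>r'<n. (A ^\<^sub>m j * B ^\<^sub>m i) $$ (r, r') * u k $ r') = lam k ^ i * (A ^\<^sub>m j *\<^sub>v u k) $ r"
    if k: "k < s" for j k
  proof -
    have u: "u k \<in> carrier_vec n" and ev: "B *\<^sub>v u k = lam k \<cdot>\<^sub>v u k" using eigen[OF k] by auto
    have Aj: "A ^\<^sub>m j \<in> carrier_mat n n" and Bi: "B ^\<^sub>m i \<in> carrier_mat n n" using A B by auto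
    have "(A ^\<^sub>m j * B ^\<^sub>m i) *\<^sub>v u k = A ^\<^sub>m j *\<^sub>v (B ^\<^sub>m i *\<^sub>v u k)"
      using Aj Bi u by (rule assoc_mult_mat_vec)
    also have "\<dots> = lam k ^ i \<cdot>\<^sub>v (A ^\<^sub>m j *\<^sub>v u k)"
      unfolding pow_mat_mult_eigenvector[OF B u ev] using Aj u by (rule mult_mat_vec)
    finally show ?thesis using mult_mat_vec_index_sum[of "A ^\<^sub>m j * B ^\<^sub>m i" n n "u k" r] Aj Bi u r
      by (simp add: carrier_matD[OF A])
  qed
  have "(?M *\<^sub>v ?x) $ (i*n+r) = (\<Sum>j<n. \<Sum>r'<n. ?M $$ (i*n+r, j*n+r') * ?x $ (j*n+r'))"
    using mult_mat_vec_index_sum[OF M x R] sum_lessThan_mult_blocks by simp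
  also have "\<dots> = (\<Sum>j<n. \<Sum>r'<n. (A ^\<^sub>m j * B ^\<^sub>m i) $$ (r, r') * (\<Sum>k<s. u k $ r' * v $ (j*s+k)))"
    using M_index coeff_embedding_mult_vec_index[OF v] by (intro sum.cong refl) auto
  also have "\<dots> = (\<Sum>j<n. \<Sum>k<s. v $ (j*s+k) * (\<Sum>r'<n. (A ^\<^sub>m j * B ^\<^sub>m i) $$ (r, r') * u k $ r'))"
    unfolding sum_distrib_left by (rule sum.cong[OF refl], subst sum.swap) (simp add: ac_simps)
  also have "\<dots> = (\<Sum>j<n. \<Sum>k<s. lam k ^ i * (v $ (j*s+k) * (A ^\<^sub>m j *\<^sub>v u k) $ r))"
    using eigen_index by (intro sum.cong refl) (simp add: ac_simps)
  finally show ?thesis .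
qed

text \<open>Group the summands of \<open>M(A,B) x\<close> by eigenvalue: every \<open>\<lambda>_k\<close> equals exactly one
  \<open>g t\<close>, and the coefficient of \<open>(g t)^i\<close> is the \<open>t\<close>-th block of the constraints applied to \<open>c\<close>.\<close>
lemma coeff_embedding_maps_kernel:
  fixes A B :: "'a :: field mat"
  assumes A: "A \<in> carrier_mat n n" and B: "B \<in> carrier_mat n n"
    and eigen: "\<And>k. k < s \<Longrightarrow> u k \<in> carrier_vec n \<and> B *\<^sub>v u k = lam k \<cdot>\<^sub>v u k"
    and g: "inj_on g {..<d}" and lam_g: "\<And>k. k < s \<Longrightarrow> lam k \<in> g ` {..<d}"
    and v: "v \<in> mat_kernel (eigen_constraints n A s u lam d g)"
  shows "coeff_embedding n s u *\<^sub>v v \<in> mat_kernel (block_M A B)"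
proof -
  let ?C = "eigen_constraints n A s u lam d g" and ?M = "block_M A B" and ?x = "coeff_embedding n s u *\<^sub>v v"
  define F where "F = (\<lambda>r j k. v $ (j*s+k) * (A ^\<^sub>m j *\<^sub>v u k) $ r)"
  have C: "?C \<in> carrier_mat (d*n) (n*s)" by (rule eigen_constraints_carrier)
  have M: "?M \<in> carrier_mat (n*n) (n*n)" using A by (rule block_M_carrier)
  have v_carrier: "v \<in> carrier_vec (n*s)" and Cv: "?C *\<^sub>v v = 0\<^sub>v (d*n)" using mat_kernelD[OF C v] by auto
  have constraint: "(\<Sum>j<n. \<Sum>k<s. if lam k = g t then F r j k else 0) = 0" if "t < d" "r < n" for t r
    using eigen_constraints_mult_vec_index[OF v_carrier that, where A = A and u = u and lam = lam and g = g]
      Cv block_index_less[OF that]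
    unfolding F_def by simp
  have power_sum: "lam k ^ i * x = (\<Sum>t<d. if lam k = g t then g t ^ i * x else 0)" if k: "k < s" for k i x
  proof -
    obtain t0 where t0: "t0 < d" "lam k = g t0" using lam_g[OF k] by auto
    have "lam k = g t \<longleftrightarrow> t = t0" if "t < d" for t using g t0 that unfolding inj_on_def by auto
    then have "(\<Sum>t<d. if lam k = g t then g t ^ i * x else 0) = (\<Sum>t<d. if t = t0 then g t0 ^ i * x else 0)"
      by (intro sum.cong refl) auto
    then show ?thesis using t0 by simp
  qed
  have x: "?x \<in> carrier_vec (n*n)" using coeff_embedding_carrier v_carrier by (rule mult_mat_vec_carrier)
  have zero_entries: "(?M *\<^sub>v ?x) $ R = 0" if R: "R < n*n" for R
  proof -
    obtain i r where i: "i < n" and r: "r < n" and R_eq: "R = i*n+r" using block_index_decompose[OF R] .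
    have "(?M *\<^sub>v ?x) $ R = (\<Sum>j<n. \<Sum>k<s. lam k ^ i * F r j k)"
      unfolding R_eq F_def by (rule block_M_mult_coeff_embedding_index[OF A B eigen v_carrier i r])
    also have "\<dots> = (\<Sum>j<n. \<Sum>k<s. \<Sum>t<d. if lam k = g t then g t ^ i * F r j k else 0)"
      by (intro sum.cong refl power_sum) simp
    also have "\<dots> = (\<Sum>t<d. g t ^ i * (\<Sum>j<n. \<Sum>k<s. if lam k = g t then F r j k else 0))"
      unfolding sum_distrib_left by (subst sum.swap, subst (2) sum.swap) (intro sum.cong refl, simp)
    also have "\<dots> = 0" using constraint r by simp
    finally show ?thesis .
  qed
  have "?M *\<^sub>v ?x = 0\<^sub>v (n*n)"
  proof (rule eq_vecI)
    fix R assume "R < dim_vec (0\<^sub>v (n*n) :: 'a vec)"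
    then show "(?M *\<^sub>v ?x) $ R = 0\<^sub>v (n*n) $ R" using zero_entries by simp
  qed (use M in simp)
  then show ?thesis by (rule mat_kernelI[OF M x])
qed

lemma kernel_dim_block_M_ge:
  fixes A B :: "'a :: field mat"
  assumes A: "A \<in> carrier_mat n n" and B: "B \<in> carrier_mat n n"
    and eigen: "\<And>k. k < s \<Longrightarrow> u k \<in> carrier_vec n \<and> B *\<^sub>v u k = lam k \<cdot>\<^sub>v u k"
    and ind: "\<And>a. \<forall>r<n. (\<Sum>k<s. a k * u k $ r) = 0 \<Longrightarrow> \<forall>k<s. a k = 0"
    and fin: "finite \<Lambda>" and lam: "\<And>k. k < s \<Longrightarrow> lam k \<in> \<Lambda>"
  shows "n*s - card \<Lambda> * n \<le> kernel_dim (block_M A B)"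
proof -
  obtain g where "bij_betw g {0..<card \<Lambda>} \<Lambda>" using ex_bij_betw_nat_finite[OF fin] by auto
  then have g: "inj_on g {..<card \<Lambda>}" and lam_g: "\<And>k. k < s \<Longrightarrow> lam k \<in> g ` {..<card \<Lambda>}"
    using lam unfolding bij_betw_def lessThan_atLeast0 by auto
  let ?C = "eigen_constraints n A s u lam (card \<Lambda>) g"
  note C = eigen_constraints_carrier[of n A s u lam "card \<Lambda>" g]
  have "n*s - card \<Lambda> * n \<le> kernel_dim ?C" using kernel_dim_ge_cols_minus_rows[of ?C] C by simp
  also have "\<dots> \<le> kernel_dim (block_M A B)"
  proof (rule kernel_dim_le_of_injective[OF C block_M_carrier[OF A] coeff_embedding_carrier])
    show "c = 0\<^sub>v (n*s)" if "c \<in> carrier_vec (n*s)" "coeff_embedding n s u *\<^sub>v c = 0\<^sub>v (n*n)" for c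
      by (rule coeff_embedding_injective[OF ind that])
    show "coeff_embedding n s u *\<^sub>v c \<in> mat_kernel (block_M A B)" if "c \<in> mat_kernel ?C" for c
      by (rule coeff_embedding_maps_kernel[OF A B eigen g lam_g that])
  qed
  finally show ?thesis .
qed

section \<open>Bases of the eigenspaces\<close>

lemma eigenspace_basis:
  fixes B :: "'a :: field mat"
  assumes B: "B \<in> carrier_mat n n"
  obtains S where "finite S" "card S = geom_mult B e" "coord_lin_indpt n S"
    "\<And>v. v \<in> S \<Longrightarrow> v \<in> carrier_vec n \<and> B *\<^sub>v v = e \<cdot>\<^sub>v v"
proof -
  have CM: "char_matrix B e \<in> carrier_mat n n" using B by simp
  obtain S where "finite S" "S \<subseteq> mat_kernel (char_matrix B e)" "coord_lin_indpt n S"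
    "card S = geom_mult B e"
    using kernel_basis_coord_lin_indpt[OF CM] unfolding geom_mult_def .
  moreover have "v \<in> carrier_vec n \<and> B *\<^sub>v v = e \<cdot>\<^sub>v v" if "v \<in> mat_kernel (char_matrix B e)" for v
  proof (cases "v = 0\<^sub>v n")
    case True
    then show ?thesis using B by (auto intro!: eq_vecI)
  next
    case False
    then have "eigenvector B v e"
      using eigenvector_char_matrix[OF B] mat_kernelD[OF CM that] by simp
    then show ?thesis unfolding eigenvector_def using mat_kernelD[OF CM that] by simp
  qed
  ultimately show thesis using that by blast
qed

lemma geom_mult_pos:
  fixes B :: "'a :: field mat"
  assumes B: "B \<in> carrier_mat n n" and "eigenvalue B e"
  shows "0 < geom_mult B e"
proof -
  have CM: "char_matrix B e \<in> carrier_mat n n" using B by simp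
  obtain v where v: "v \<in> carrier_vec n" "v \<noteq> 0\<^sub>v n" "char_matrix B e *\<^sub>v v = 0\<^sub>v n"
    using assms unfolding eigenvalue_char_matrix[OF B] by auto
  have "\<exists>i<n. v $ i \<noteq> 0"
  proof (rule ccontr)
    assume "\<not> (\<exists>i<n. v $ i \<noteq> 0)"
    then have "v = 0\<^sub>v n" using v(1) by (intro eq_vecI) auto
    with v(2) show False ..
  qed
  then have "coord_lin_indpt n {v}" unfolding coord_lin_indpt_def by auto
  moreover have "{v} \<subseteq> mat_kernel (char_matrix B e)" using mat_kernelI[OF CM v(1,3)] by simp
  ultimately have "card {v} \<le> geom_mult B e"
    unfolding geom_mult_def by (intro card_le_kernel_dim[OF CM]) auto
  then show ?thesis by simp
qed

lemma eigenspace_bases_union_indpt: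
  fixes B :: "'a :: field mat"
  assumes B: "B \<in> carrier_mat n n" and fin: "finite L" "\<And>e. e \<in> L \<Longrightarrow> finite (S e)"
    and ind: "\<And>e. e \<in> L \<Longrightarrow> coord_lin_indpt n (S e)"
    and eigen: "\<And>e v. e \<in> L \<Longrightarrow> v \<in> S e \<Longrightarrow> v \<in> carrier_vec n \<and> B *\<^sub>v v = e \<cdot>\<^sub>v v"
    and zero: "\<And>r. r < n \<Longrightarrow> (\<Sum>p\<in>Sigma L S. a p * snd p $ r) = 0"
  shows "\<forall>p\<in>Sigma L S. a p = 0"
proof -
  define w where "w = (\<lambda>e. vec n (\<lambda>r. \<Sum>v\<in>S e. a (e, v) * v $ r))"
  have sum_w: "(\<Sum>e\<in>L. w e $ r) = 0" if r: "r < n" for r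
  proof -
    have "(\<Sum>e\<in>L. w e $ r) = (\<Sum>e\<in>L. \<Sum>v\<in>S e. a (e, v) * v $ r)" unfolding w_def using r by simp
    also have "\<dots> = (\<Sum>p\<in>Sigma L S. a p * snd p $ r)" using fin by (subst sum.Sigma) (auto simp: case_prod_beta)
    finally show ?thesis using zero[OF r] by simp
  qed
  have eigen_w: "w e \<in> carrier_vec n \<and> B *\<^sub>v w e = e \<cdot>\<^sub>v w e" if e: "e \<in> L" for e
    using eigenvector_coord_lincomb[OF B, of "S e" e "\<lambda>v. a (e, v)"] eigen[OF e]
    unfolding w_def by blast
  have w_zero: "\<forall>e\<in>L. w e = 0\<^sub>v n"
    by (rule eigenvectors_sum_zero_imp_zero[OF B fin(1) eigen_w sum_w])
  have "\<forall>v\<in>S e. a (e, v) = 0" if e: "e \<in> L" for e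
  proof -
    have coords: "(\<Sum>v\<in>S e. a (e, v) * v $ r) = 0" if r: "r < n" for r
      using arg_cong[of _ _ "\<lambda>x. x $ r", OF bspec[OF w_zero e]] r unfolding w_def by simp
    show ?thesis
      using ind[OF e, unfolded coord_lin_indpt_def, THEN spec[of _ "\<lambda>v. a (e, v)"]] coords by simp
  qed
  then show ?thesis by auto
qed

lemma eigenvector_family:
  fixes B :: "'a :: field mat"
  assumes B: "B \<in> carrier_mat n n"
  defines "s \<equiv> \<Sum>e | eigenvalue B e. geom_mult B e"
  obtains u lam where
    "\<And>k. k < s \<Longrightarrow> u k \<in> carrier_vec n \<and> B *\<^sub>v u k = lam k \<cdot>\<^sub>v u k"
    "\<And>k. k < s \<Longrightarrow> eigenvalue B (lam k)"
    "\<And>a. \<forall>r<n. (\<Sum>k<s. a k * u k $ r) = 0 \<Longrightarrow> \<forall>k<s. a k = 0"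
proof -
  define L where "L = {e. eigenvalue B e}"
  have fin_L: "finite L" using card_finite_spectrum(1)[OF B] unfolding L_def spectrum_def .
  have "\<forall>e. \<exists>S. finite S \<and> card S = geom_mult B e \<and> coord_lin_indpt n S \<and>
      (\<forall>v\<in>S. v \<in> carrier_vec n \<and> B *\<^sub>v v = e \<cdot>\<^sub>v v)"
  proof
    fix e
    show "\<exists>S. finite S \<and> card S = geom_mult B e \<and> coord_lin_indpt n S \<and>
      (\<forall>v\<in>S. v \<in> carrier_vec n \<and> B *\<^sub>v v = e \<cdot>\<^sub>v v)"
      by (rule eigenspace_basis[OF B, where e = e]) blast
  qed
  then obtain S where S: "\<forall>e. finite (S e) \<and> card (S e) = geom_mult B e \<and> coord_lin_indpt n (S e) \<and>
      (\<forall>v\<in>S e. v \<in> carrier_vec n \<and> B *\<^sub>v v = e \<cdot>\<^sub>v v)"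
    by (rule choice[THEN exE])
  have S_fin: "finite (S e)" and S_card: "card (S e) = geom_mult B e"
    and S_ind: "coord_lin_indpt n (S e)" for e
    using S by simp_all
  have S_eigen: "v \<in> carrier_vec n \<and> B *\<^sub>v v = e \<cdot>\<^sub>v v" if "v \<in> S e" for e v
    using S that by blast
  have "card (Sigma L S) = s" unfolding s_def L_def[symmetric] using fin_L S_fin S_card by simp
  moreover have "finite (Sigma L S)" using fin_L S_fin by simp
  ultimately obtain f where f: "bij_betw f {0..<s} (Sigma L S)"
    using ex_bij_betw_nat_finite by metis
  have f_mem: "f k \<in> Sigma L S" if "k < s" for k using bij_betwE[OF f] that by simp
  have f_in: "fst (f k) \<in> L" "snd (f k) \<in> S (fst (f k))" if "k < s" for k
    using f_mem[OF that] by (cases "f k", simp_all)+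
  show thesis
  proof (rule that[of "\<lambda>k. snd (f k)" "\<lambda>k. fst (f k)"])
    fix k assume k: "k < s"
    show "snd (f k) \<in> carrier_vec n \<and> B *\<^sub>v snd (f k) = fst (f k) \<cdot>\<^sub>v snd (f k)"
      using S_eigen f_in(2)[OF k] .
    show "eigenvalue B (fst (f k))" using f_in(1)[OF k] unfolding L_def by simp
  next
    fix a assume zero: "\<forall>r<n. (\<Sum>k<s. a k * snd (f k) $ r) = 0"
    define a' where "a' = a \<circ> the_inv_into {0..<s} f"
    have a'_f: "a' (f k) = a k" if "k < s" for k
      unfolding a'_def using f that by (simp add: bij_betw_def the_inv_into_f_f)
    have "(\<Sum>p\<in>Sigma L S. a' p * snd p $ r) = (\<Sum>k<s. a k * snd (f k) $ r)" for r
    proof -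
      have "(\<Sum>p\<in>Sigma L S. a' p * snd p $ r) = (\<Sum>k\<in>{0..<s}. a' (f k) * snd (f k) $ r)"
        by (rule sum.reindex_bij_betw[OF f, symmetric])
      also have "\<dots> = (\<Sum>k<s. a k * snd (f k) $ r)"
        unfolding lessThan_atLeast0 using a'_f by (intro sum.cong refl) simp
      finally show ?thesis .
    qed
    then have "\<And>r. r < n \<Longrightarrow> (\<Sum>p\<in>Sigma L S. a' p * snd p $ r) = 0" using zero by simp
    from eigenspace_bases_union_indpt[OF B fin_L S_fin S_ind S_eigen this]
    have a'_zero: "\<forall>p\<in>Sigma L S. a' p = 0" .
    show "\<forall>k<s. a k = 0"
    proof (intro allI impI)
      fix k assume k: "k < s"
      have "a' (f k) = 0" using bspec[OF a'_zero f_mem[OF k]] .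
      then show "a k = 0" using a'_f[OF k] by simp
    qed
  qed
qed

theorem mainTheorem2:
  fixes A B :: "'a :: field mat" and n :: nat
  assumes "A \<in> carrier_mat n n" and "B \<in> carrier_mat n n"
  shows "kernel_dim (block_M A B) \<ge> n * (\<Sum>e\<in>{e. eigenvalue B e}. geom_mult B e - 1)"
proof -
  let ?L = "{e. eigenvalue B e}"
  let ?s = "\<Sum>e\<in>?L. geom_mult B e"
  have fin_L: "finite ?L" using card_finite_spectrum(1)[OF assms(2)] unfolding spectrum_def .
  obtain u lam where eigen: "\<And>k. k < ?s \<Longrightarrow> u k \<in> carrier_vec n \<and> B *\<^sub>v u k = lam k \<cdot>\<^sub>v u k"
    and eigenvalue_lam: "\<And>k. k < ?s \<Longrightarrow> eigenvalue B (lam k)"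
    and ind: "\<And>a. \<forall>r<n. (\<Sum>k<?s. a k * u k $ r) = 0 \<Longrightarrow> \<forall>k<?s. a k = 0"
    using eigenvector_family[OF assms(2)] by blast
  have lam_L: "lam k \<in> ?L" if "k < ?s" for k using eigenvalue_lam[OF that] by simp
  have "n * ?s - card ?L * n \<le> kernel_dim (block_M A B)"
    by (rule kernel_dim_block_M_ge[OF assms eigen ind fin_L lam_L])
  moreover have "(\<Sum>e\<in>?L. geom_mult B e - 1) = ?s - card ?L"
    using sum_subtractf_nat[of ?L "\<lambda>_. 1" "geom_mult B"] geom_mult_pos[OF assms(2)]
    by (simp add: Suc_le_eq)
  ultimately show ?thesis by (simp add: diff_mult_distrib2 mult.commute)
qed

end
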